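(* Let $\mathcal R$ and $\mathcal S$ be TRSs which are normalization equivalent modulo $\mathcal B$, terminating modulo $\mathcal B$, left-reduced and right-$\mathcal B$-reduced. Then every rule of $\mathcal R$ has a right-$\mathcal B$-equivalent variant in $\mathcal S$ and vice versa.
   Context: Terms over a signature $\mathcal F$; $\to_{\mathcal R}$ is the usual rewrite relation, $\leftarrow$ its inverse. $\mathcal B$ is a fixed ES with $\mathrm{Var}(\ell)=\mathrm{Var}(r)$ for all $\ell\approx r\in\mathcal B$, $\sim_{\mathcal B}=\leftrightarrow^*_{\mathcal B}$, $\to_{\mathcal R/\mathcal B}=\sim_{\mathcal B}\cdot\to_{\mathcal R}\cdot\sim_{\mathcal B}$. Terminating modulo $\mathcal B$: no infinite $\to_{\mathcal R/\mathcal B}$-sequence. Normalization equivalent modulo $\mathcal B$: $\to^!_{\mathcal R}\cdot\sim_{\mathcal B}=\to^!_{\mathcal S}\cdot\sim_{\mathcal B}$, where $a\to^!b$ means $a\to^*b$ with $b$ a normal form. A TRS is left-reduced if for every rule $\ell\to r$, $\ell$ is a normal form of the TRS without that rule; right-$\mathcal B$-reduced if for every rule $\ell\to r$, $r$ is a normal form of $\to_{\mathcal R/\mathcal B}$. Two rules $\ell\to r,\ell'\to r'$ are right-$\mathcal B$-equivalent variants if there is a renaming $\sigma$ with $\ell\sigma=\ell'$ and $r\sigma\sim_{\mathcal B}r'$. *)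

theory Defs
  imports Main
begin

datatype ('f, 'v) "term" = Var 'v | Fun 'f "('f, 'v) term list"

type_synonym ('f, 'v) rule = "('f, 'v) term \<times> ('f, 'v) term"
type_synonym ('f, 'v) trs = "('f, 'v) rule set"
type_synonym ('f, 'v) subst = "'v \<Rightarrow> ('f, 'v) term"

fun subst_apply :: "('f, 'v) term \<Rightarrow> ('f, 'v) subst \<Rightarrow> ('f, 'v) term" (infixl "\<cdot>" 67) where
  "Var x \<cdot> \<sigma> = \<sigma> x"
| "Fun f ts \<cdot> \<sigma> = Fun f (map (\<lambda>t. t \<cdot> \<sigma>) ts)"

fun vars_term :: "('f, 'v) term \<Rightarrow> 'v set" where
  "vars_term (Var x) = {x}"
| "vars_term (Fun f ts) = (\<Union>t \<in> set ts. vars_term t)"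

inductive_set rstep :: "('f, 'v) trs \<Rightarrow> ('f, 'v) term rel" for R where
  root: "(l, r) \<in> R \<Longrightarrow> (l \<cdot> \<sigma>, r \<cdot> \<sigma>) \<in> rstep R"
| ctxt: "(s, t) \<in> rstep R \<Longrightarrow> (Fun f (ss1 @ s # ss2), Fun f (ss1 @ t # ss2)) \<in> rstep R"

definition wf_trs :: "('f, 'v) trs \<Rightarrow> bool" where
  "wf_trs R \<longleftrightarrow> (\<forall>(l, r) \<in> R. (\<forall>x. l \<noteq> Var x) \<and> vars_term r \<subseteq> vars_term l)"

definition var_preserving_es :: "('f, 'v) trs \<Rightarrow> bool" where
  "var_preserving_es B \<longleftrightarrow> (\<forall>(l, r) \<in> B. vars_term l = vars_term r)"

definition equivB :: "('f, 'v) trs \<Rightarrow> ('f, 'v) term rel" where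
  "equivB B = (rstep B \<union> (rstep B)\<inverse>)\<^sup>*"

definition rstep_mod :: "('f, 'v) trs \<Rightarrow> ('f, 'v) trs \<Rightarrow> ('f, 'v) term rel" where
  "rstep_mod R B = equivB B O rstep R O equivB B"

definition NF :: "'a rel \<Rightarrow> 'a set" where
  "NF A = {a. \<forall>b. (a, b) \<notin> A}"

definition normalizes :: "'a rel \<Rightarrow> 'a rel" where
  "normalizes A = {(a, b). (a, b) \<in> A\<^sup>* \<and> b \<in> NF A}"

definition SN :: "'a rel \<Rightarrow> bool" where
  "SN A \<longleftrightarrow> \<not> (\<exists>f. \<forall>i. (f i, f (Suc i)) \<in> A)"

definition terminating_mod :: "('f, 'v) trs \<Rightarrow> ('f, 'v) trs \<Rightarrow> bool" where
  "terminating_mod R B \<longleftrightarrow> SN (rstep_mod R B)"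

definition NF_equivalent_mod :: "('f, 'v) trs \<Rightarrow> ('f, 'v) trs \<Rightarrow> ('f, 'v) trs \<Rightarrow> bool" where
  "NF_equivalent_mod R S B \<longleftrightarrow>
     normalizes (rstep R) O equivB B = normalizes (rstep S) O equivB B"

definition left_reduced :: "('f, 'v) trs \<Rightarrow> bool" where
  "left_reduced R \<longleftrightarrow> (\<forall>(l, r) \<in> R. l \<in> NF (rstep (R - {(l, r)})))"

definition right_reduced_mod :: "('f, 'v) trs \<Rightarrow> ('f, 'v) trs \<Rightarrow> bool" where
  "right_reduced_mod R B \<longleftrightarrow> (\<forall>(l, r) \<in> R. r \<in> NF (rstep_mod R B))"

definition right_equiv_variants :: "('f, 'v) trs \<Rightarrow> ('f, 'v) rule \<Rightarrow> ('f, 'v) rule \<Rightarrow> bool" where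
  "right_equiv_variants B rl rl' \<longleftrightarrow>
     (\<exists>\<rho>. bij \<rho> \<and> fst rl \<cdot> (Var \<circ> \<rho>) = fst rl' \<and> (snd rl \<cdot> (Var \<circ> \<rho>), snd rl') \<in> equivB B)"

end

theory Submission
  imports Defs
begin

text \<open>
  Normalization equivalence together with termination modulo \<open>B\<close> forces \<open>R\<close> and \<open>S\<close> to have
  the same normal forms: a term that is \<open>R\<close>-normal but \<open>S\<close>-reducible would \<open>S\<close>-normalize to a
  term \<open>B\<close>-equivalent to itself, giving a cycle of \<open>\<rightarrow>\<^sub>S\<^sub>/\<^sub>B\<close>.
  Let \<open>l \<rightarrow> r\<close> be a rule of \<open>R\<close>. In a left-reduced system the proper subterms of \<open>l\<close> are
  normal, so \<open>l\<close> is \<open>S\<close>-reducible only at the root: \<open>l = l'\<sigma>\<close> for a rule \<open>l' \<rightarrow> r'\<close> of \<open>S\<close>.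
  Symmetrically \<open>l'\<close> is an instance of a left-hand side of \<open>R\<close>, which by left-reducedness of
  \<open>R\<close> can only be \<open>l\<close>; hence \<open>l\<close> and \<open>l'\<close> are variants. Finally the only \<open>R\<close>-reduct of \<open>l\<close> is
  the normal form \<open>r\<close>, while \<open>l\<close> \<open>S\<close>-normalizes to \<open>r'\<sigma>\<close>, so normalization equivalence gives
  \<open>r \<sim>\<^sub>B r'\<sigma>\<close>.
\<close>

lemma subst_subst_compose: "t \<cdot> \<sigma> \<cdot> \<tau> = t \<cdot> (\<lambda>x. \<sigma> x \<cdot> \<tau>)"
  by (induction t) auto

lemma subst_apply_Var: "t \<cdot> Var = t"
  by (induction t) (auto intro: map_idI)

lemma term_subst_eq: "(\<And>x. x \<in> vars_term t \<Longrightarrow> \<sigma> x = \<tau> x) \<Longrightarrow> t \<cdot> \<sigma> = t \<cdot> \<tau>"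
  by (induction t) auto

lemma subst_fixpoint_Var:
  assumes "t \<cdot> \<sigma> = t" and "x \<in> vars_term t"
  shows "\<sigma> x = Var x"
  using assms
proof (induction t)
  case (Fun f ts)
  then obtain u where u: "u \<in> set ts" "x \<in> vars_term u" by auto
  from Fun.prems(1) have "map (\<lambda>t. t \<cdot> \<sigma>) ts = ts" by simp
  with u(1) have "u \<cdot> \<sigma> = u" by (metis map_eq_conv map_ident)
  with Fun.IH u show ?case by blast
qed simp

lemma vars_term_subst_imp: "y \<in> vars_term (t \<cdot> \<sigma>) \<Longrightarrow> \<exists>x \<in> vars_term t. y \<in> vars_term (\<sigma> x)"
  by (induction t) fastforce+

lemma finite_vars_term: "finite (vars_term t)"
  by (induction t) auto

lemma size_subst: "size t \<le> size (t \<cdot> \<sigma>)"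
proof (induction t)
  case (Var x)
  then show ?case by (cases "\<sigma> x") simp_all
next
  case (Fun f ts)
  then have "size_list size ts \<le> size_list size (map (\<lambda>t. t \<cdot> \<sigma>) ts)"
    by (induction ts) (auto simp: add_mono)
  then show ?case by simp
qed

lemma inj_on_extends_to_bij:
  fixes g :: "'a \<Rightarrow> 'a"
  assumes "finite D" and "inj_on g D"
  obtains \<rho> where "bij \<rho>" and "\<And>x. x \<in> D \<Longrightarrow> \<rho> x = g x"
proof -
  define E where "E = g ` D"
  have "finite E" and "card E = card D"
    using assms card_image unfolding E_def by auto
  then have "card (E - D) = card (D - E)"
    using assms(1) by (metis card_Diff_subset_Int finite_Int Int_commute)
  then obtain h where h: "bij_betw h (E - D) (D - E)"
    using finite_same_card_bij \<open>finite E\<close> assms(1) by blast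
  \<comment> \<open>\<open>g\<close> maps \<open>D\<close> onto \<open>E\<close>; \<open>h\<close> closes the permutation by mapping \<open>E - D\<close> back onto \<open>D - E\<close>.\<close>
  define \<rho> where "\<rho> x = (if x \<in> D then g x else if x \<in> E then h x else x)" for x
  have "bij_betw \<rho> D E"
    using assms(2) unfolding E_def by (metis (mono_tags, lifting) \<rho>_def bij_betw_cong inj_on_imp_bij_betw)
  moreover have "bij_betw \<rho> (E - D) (D - E)"
    using h by (rule bij_betw_cong[THEN iffD1, rotated]) (simp add: \<rho>_def)
  moreover have "bij_betw \<rho> (- (D \<union> E)) (- (D \<union> E))"
    by (rule bij_betw_cong[THEN iffD2, of _ _ id]) (auto simp: \<rho>_def)
  ultimately have "bij_betw \<rho> (D \<union> (E - D) \<union> - (D \<union> E)) (E \<union> (D - E) \<union> - (D \<union> E))"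
    by (blast intro: bij_betw_combine)
  moreover have "D \<union> (E - D) \<union> - (D \<union> E) = UNIV" "E \<union> (D - E) \<union> - (D \<union> E) = UNIV"
    by auto
  ultimately have "bij \<rho>" by simp
  then show ?thesis using that by (simp add: \<rho>_def)
qed

lemma rstep_subst: "(s, t) \<in> rstep R \<Longrightarrow> (s \<cdot> \<sigma>, t \<cdot> \<sigma>) \<in> rstep R"
proof (induction rule: rstep.induct)
  case (root l r \<tau>)
  then show ?case using rstep.root[OF root, of "\<lambda>x. \<tau> x \<cdot> \<sigma>"] by (simp add: subst_subst_compose)
next
  case (ctxt s t f ss1 ss2)
  then show ?case
    using rstep.ctxt[OF ctxt.IH, of f "map (\<lambda>t. t \<cdot> \<sigma>) ss1" "map (\<lambda>t. t \<cdot> \<sigma>) ss2"] by simp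
qed

lemma rstep_rule: "(l, r) \<in> R \<Longrightarrow> (l, r) \<in> rstep R"
  using rstep.root[of l r R Var] by (simp add: subst_apply_Var)

lemma rstep_mono: "(s, t) \<in> rstep R \<Longrightarrow> R \<subseteq> S \<Longrightarrow> (s, t) \<in> rstep S"
  by (induction rule: rstep.induct) (auto intro: rstep.intros)

lemma rstep_imp_rstep_rule: "(s, t) \<in> rstep R \<Longrightarrow> \<exists>rl \<in> R. (s, t) \<in> rstep {rl}"
  by (induction rule: rstep.induct) (auto intro: rstep.intros)

lemma rstep_rule_size: "(s, t) \<in> rstep {(a, b)} \<Longrightarrow> size a \<le> size s"
proof (induction rule: rstep.induct)
  case (root l r \<sigma>)
  then show ?case using size_subst[of l \<sigma>] by auto
next
  case (ctxt s t f ss1 ss2)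
  then show ?case by simp
qed

lemma rstep_rule_root_if_args_NF:
  assumes "(s, t) \<in> rstep {(a, b)}" and "(a, b) \<in> R"
    and "\<And>f ss1 u ss2. s = Fun f (ss1 @ u # ss2) \<Longrightarrow> u \<in> NF (rstep R)"
  shows "\<exists>\<sigma>. s = a \<cdot> \<sigma> \<and> t = b \<cdot> \<sigma>"
  using assms(1)
proof (cases rule: rstep.cases)
  case (ctxt u u' f ss1 ss2)
  then have "(u, u') \<in> rstep R" using assms(2) rstep_mono by blast
  with assms(3) ctxt show ?thesis unfolding NF_def by blast
qed auto

lemma NF_subst_imp_NF:
  assumes "s \<cdot> \<tau> \<in> NF (rstep R)"
  shows "s \<in> NF (rstep R)"
  using assms rstep_subst unfolding NF_def by blast

lemma equivB_refl: "(t, t) \<in> equivB B"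
  unfolding equivB_def by simp

lemma equivB_subst: "(s, t) \<in> equivB B \<Longrightarrow> (s \<cdot> \<sigma>, t \<cdot> \<sigma>) \<in> equivB B"
  unfolding equivB_def
proof (induction rule: rtrancl_induct)
  case (step y z)
  then have "(y \<cdot> \<sigma>, z \<cdot> \<sigma>) \<in> rstep B \<union> (rstep B)\<inverse>" using rstep_subst by blast
  with step.IH show ?case by (meson rtrancl.rtrancl_into_rtrancl)
qed simp

lemma rstep_subset_rstep_mod: "rstep R \<subseteq> rstep_mod R B"
  unfolding rstep_mod_def equivB_def by (auto intro: relcompI)

lemma SN_trancl_irrefl: "SN A \<Longrightarrow> (x, x) \<notin> A\<^sup>+"
proof
  assume "SN A" and x: "(x, x) \<in> A\<^sup>+"
  from \<open>SN A\<close> have "wf (A\<inverse>)"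
    unfolding SN_def wf_iff_no_infinite_down_chain by simp
  then have "(x, x) \<notin> (A\<inverse>)\<^sup>+"
    by (intro wf_not_refl wf_trancl)
  with x show False by (simp add: trancl_converse)
qed

lemma NF_equivalent_mod_sym: "NF_equivalent_mod R S B \<Longrightarrow> NF_equivalent_mod S R B"
  unfolding NF_equivalent_mod_def by simp

lemma NF_equivalent_mod_NF_subset:
  assumes "NF_equivalent_mod R S B" and "terminating_mod S B"
  shows "NF (rstep R) \<subseteq> NF (rstep S)"
proof
  fix s assume "s \<in> NF (rstep R)"
  then have "(s, s) \<in> normalizes (rstep R) O equivB B"
    using equivB_refl unfolding normalizes_def by blast
  then have "(s, s) \<in> normalizes (rstep S) O equivB B"
    using assms(1) unfolding NF_equivalent_mod_def by simp
  then obtain u where su: "(s, u) \<in> (rstep S)\<^sup>*" and u: "u \<in> NF (rstep S)"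
    and us: "(u, s) \<in> equivB B" unfolding normalizes_def by blast
  show "s \<in> NF (rstep S)"
  proof (rule ccontr)
    assume "s \<notin> NF (rstep S)"
    with u have "s \<noteq> u" by auto
    with su obtain w where sw: "(s, w) \<in> rstep S" and wu: "(w, u) \<in> (rstep S)\<^sup>*"
      by (metis converse_rtranclE)
    have "(u, w) \<in> rstep_mod S B"
      using us sw equivB_refl unfolding rstep_mod_def by blast
    moreover have "(w, u) \<in> (rstep_mod S B)\<^sup>*"
      using rtrancl_mono[OF rstep_subset_rstep_mod] wu by blast
    ultimately have "(u, u) \<in> (rstep_mod S B)\<^sup>+" by (rule rtrancl_into_trancl2)
    with assms(2) show False unfolding terminating_mod_def by (simp add: SN_trancl_irrefl)
  qed
qed

lemma right_reduced_mod_rhs_NF: "right_reduced_mod R B \<Longrightarrow> (l, r) \<in> R \<Longrightarrow> r \<in> NF (rstep R)"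
  using rstep_subset_rstep_mod unfolding right_reduced_mod_def NF_def by blast

lemma left_reducedD: "left_reduced R \<Longrightarrow> (l, r) \<in> R \<Longrightarrow> l \<in> NF (rstep (R - {(l, r)}))"
  unfolding left_reduced_def by blast

lemma left_reduced_arg_NF:
  assumes "left_reduced R" and "(l, r) \<in> R" and "l = Fun f (ss1 @ s # ss2)"
  shows "s \<in> NF (rstep R)"
proof (rule ccontr)
  assume "s \<notin> NF (rstep R)"
  then obtain t a b where ab: "(a, b) \<in> R" "(s, t) \<in> rstep {(a, b)}"
    unfolding NF_def using rstep_imp_rstep_rule by fastforce
  \<comment> \<open>The rule applies to a proper subterm of \<open>l\<close>, so its left-hand side is smaller than \<open>l\<close>.\<close>
  have "size a < size l"
    using rstep_rule_size[OF ab(2)] assms(3) by simp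
  with ab(1) have "{(a, b)} \<subseteq> R - {(l, r)}" by auto
  with ab(2) have "(s, t) \<in> rstep (R - {(l, r)})" by (rule rstep_mono)
  then have "(l, Fun f (ss1 @ t # ss2)) \<in> rstep (R - {(l, r)})"
    unfolding assms(3) by (rule rstep.ctxt)
  with left_reducedD[OF assms(1,2)] show False unfolding NF_def by blast
qed

lemma left_reduced_lhs_instance:
  assumes "left_reduced R" and "(l, r) \<in> R" and "(a, b) \<in> R" and "l = a \<cdot> \<theta>"
  shows "(a, b) = (l, r)"
proof (rule ccontr)
  assume "(a, b) \<noteq> (l, r)"
  with assms(3) have "(a \<cdot> \<theta>, b \<cdot> \<theta>) \<in> rstep (R - {(l, r)})" by (auto intro: rstep.root)
  with left_reducedD[OF assms(1,2)] assms(4) show False unfolding NF_def by simp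
qed

lemma left_reduced_lhs_reduct:
  assumes "wf_trs R" and "left_reduced R" and "(l, r) \<in> R" and "(l, w) \<in> rstep R"
  shows "w = r"
proof -
  obtain a b where ab: "(a, b) \<in> R" "(l, w) \<in> rstep {(a, b)}"
    using rstep_imp_rstep_rule[OF assms(4)] by fastforce
  have "\<exists>\<theta>. l = a \<cdot> \<theta> \<and> w = b \<cdot> \<theta>"
    using ab(2,1) by (rule rstep_rule_root_if_args_NF) (rule left_reduced_arg_NF[OF assms(2,3)])
  then obtain \<theta> where l: "l = a \<cdot> \<theta>" and w: "w = b \<cdot> \<theta>" by blast
  have "a = l" and "b = r"
    using left_reduced_lhs_instance[OF assms(2,3) ab(1) l] by simp_all
  then have fixes_l: "l \<cdot> \<theta> = l" and w_eq: "w = r \<cdot> \<theta>"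
    using l w by simp_all
  have "r \<cdot> \<theta> = r \<cdot> Var"
  proof (rule term_subst_eq)
    fix x assume "x \<in> vars_term r"
    then have "x \<in> vars_term l"
      using assms(1,3) unfolding wf_trs_def by blast
    then show "\<theta> x = Var x" by (rule subst_fixpoint_Var[OF fixes_l])
  qed
  with w_eq show ?thesis by (simp add: subst_apply_Var)
qed

lemma left_reduced_lhs_normalizes_to_rhs:
  assumes "wf_trs R" and "left_reduced R" and "(l, r) \<in> R" and "r \<in> NF (rstep R)"
    and "(l, v) \<in> (rstep R)\<^sup>*" and "v \<in> NF (rstep R)"
  shows "v = r"
  using assms(5)
proof (cases rule: converse_rtranclE)
  case base
  with assms(6) rstep_rule[OF assms(3)] show ?thesis unfolding NF_def by auto
next
  case (step w)
  then have "(r, v) \<in> (rstep R)\<^sup>*"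
    using left_reduced_lhs_reduct[OF assms(1-3)] by simp
  then show ?thesis
  proof (cases rule: converse_rtranclE)
    case (step u)
    with assms(4) show ?thesis unfolding NF_def by auto
  qed simp
qed

lemma mutual_instances_renaming:
  assumes "l = l' \<cdot> \<sigma>" and "l' = l \<cdot> \<tau>"
  obtains \<rho> where "bij \<rho>" and "\<And>x. x \<in> vars_term l \<Longrightarrow> \<tau> x = Var (\<rho> x)"
    and "\<And>y. y \<in> vars_term l' \<Longrightarrow> \<sigma> y \<cdot> \<tau> = Var y"
proof -
  have "l \<cdot> (\<lambda>x. \<tau> x \<cdot> \<sigma>) = l"
    using assms by (simp add: subst_subst_compose)
  then have \<tau>\<sigma>: "\<tau> x \<cdot> \<sigma> = Var x" if "x \<in> vars_term l" for x
    using that by (rule subst_fixpoint_Var)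
  have "\<exists>g. \<forall>x \<in> vars_term l. \<tau> x = Var (g x) \<and> \<sigma> (g x) = Var x"
  proof (rule bchoice, rule ballI)
    fix x assume "x \<in> vars_term l"
    then show "\<exists>y. \<tau> x = Var y \<and> \<sigma> y = Var x"
      using \<tau>\<sigma>[of x] by (cases "\<tau> x") auto
  qed
  then obtain g where g: "\<And>x. x \<in> vars_term l \<Longrightarrow> \<tau> x = Var (g x) \<and> \<sigma> (g x) = Var x"
    by blast
  have inj: "inj_on g (vars_term l)"
  proof (rule inj_onI)
    fix x y assume x: "x \<in> vars_term l" and y: "y \<in> vars_term l" and "g x = g y"
    have "Var x = \<sigma> (g x)" using g[OF x] by simp
    also have "\<dots> = Var y" using g[OF y] \<open>g x = g y\<close> by simp
    finally show "x = y" by simp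
  qed
  obtain \<rho> where "bij \<rho>" and \<rho>: "\<And>x. x \<in> vars_term l \<Longrightarrow> \<rho> x = g x"
    using inj_on_extends_to_bij[OF finite_vars_term inj] by blast
  show ?thesis
  proof (rule that[OF \<open>bij \<rho>\<close>])
    fix x assume x: "x \<in> vars_term l"
    have "\<tau> x = Var (g x)" using g[OF x] by (rule conjunct1)
    then show "\<tau> x = Var (\<rho> x)" by (simp only: \<rho>[OF x])
  next
    fix y assume "y \<in> vars_term l'"
    then have "y \<in> vars_term (l \<cdot> \<tau>)" using assms(2) by simp
    then obtain x where x: "x \<in> vars_term l" and "y \<in> vars_term (\<tau> x)"
      by (blast dest: vars_term_subst_imp)
    then have "y = g x" using g[OF x] by simp
    then show "\<sigma> y \<cdot> \<tau> = Var y" using g[OF x] by simp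
  qed
qed

lemma left_reduced_lhs_variant:
  assumes "left_reduced R" and "left_reduced S" and "NF (rstep R) = NF (rstep S)"
    and "(l, r) \<in> R"
  obtains l' r' \<sigma> \<tau> where "(l', r') \<in> S" and "l = l' \<cdot> \<sigma>" and "l' = l \<cdot> \<tau>"
proof -
  have "l \<notin> NF (rstep S)"
    using assms(3) rstep_rule[OF assms(4)] unfolding NF_def by blast
  then obtain t l' r' where S: "(l', r') \<in> S" "(l, t) \<in> rstep {(l', r')}"
    unfolding NF_def using rstep_imp_rstep_rule by fastforce
  have "\<exists>\<sigma>. l = l' \<cdot> \<sigma> \<and> t = r' \<cdot> \<sigma>"
    using S(2,1) by (rule rstep_rule_root_if_args_NF)
      (use left_reduced_arg_NF[OF assms(1,4)] assms(3) in blast)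
  then obtain \<sigma> where l: "l = l' \<cdot> \<sigma>" by blast
  have "l' \<notin> NF (rstep R)"
    using assms(3) rstep_rule[OF S(1)] unfolding NF_def by blast
  then obtain t' a b where R: "(a, b) \<in> R" "(l', t') \<in> rstep {(a, b)}"
    unfolding NF_def using rstep_imp_rstep_rule by fastforce
  have "\<exists>\<tau>. l' = a \<cdot> \<tau> \<and> t' = b \<cdot> \<tau>"
    using R(2,1) by (rule rstep_rule_root_if_args_NF)
      (use left_reduced_arg_NF[OF assms(2) S(1)] assms(3) in blast)
  then obtain \<tau> where l': "l' = a \<cdot> \<tau>" by blast
  have "l = a \<cdot> (\<lambda>x. \<tau> x \<cdot> \<sigma>)"
    using l l' by (simp add: subst_subst_compose)
  with left_reduced_lhs_instance[OF assms(1,4) R(1)] have "a = l" by simp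
  with that S(1) l l' show ?thesis by blast
qed

lemma NF_equivalent_mod_rhs_equivB:
  assumes "NF_equivalent_mod R S B" and "wf_trs R" and "left_reduced R"
    and "right_reduced_mod R B" and "(l, r) \<in> R"
    and "(l', r') \<in> S" and "l = l' \<cdot> \<sigma>" and "r' \<cdot> \<sigma> \<in> NF (rstep S)"
  shows "(r, r' \<cdot> \<sigma>) \<in> equivB B"
proof -
  have "(l, r' \<cdot> \<sigma>) \<in> rstep S"
    using rstep.root[OF assms(6)] assms(7) by simp
  with assms(8) have "(l, r' \<cdot> \<sigma>) \<in> normalizes (rstep S) O equivB B"
    using equivB_refl unfolding normalizes_def by blast
  then have "(l, r' \<cdot> \<sigma>) \<in> normalizes (rstep R) O equivB B"
    using assms(1) unfolding NF_equivalent_mod_def by simp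
  then obtain v where "(l, v) \<in> (rstep R)\<^sup>*" "v \<in> NF (rstep R)" "(v, r' \<cdot> \<sigma>) \<in> equivB B"
    unfolding normalizes_def by blast
  with left_reduced_lhs_normalizes_to_rhs[OF assms(2,3,5) right_reduced_mod_rhs_NF[OF assms(4,5)]]
  show ?thesis by blast
qed

lemma rule_has_right_equiv_variant:
  assumes "wf_trs R" and "wf_trs S" and "NF_equivalent_mod R S B"
    and "NF (rstep R) = NF (rstep S)"
    and "left_reduced R" and "left_reduced S"
    and "right_reduced_mod R B" and "right_reduced_mod S B"
    and "(l, r) \<in> R"
  shows "\<exists>rl' \<in> S. right_equiv_variants B (l, r) rl'"
proof -
  obtain l' r' \<sigma> \<tau> where S: "(l', r') \<in> S" and l: "l = l' \<cdot> \<sigma>" and l': "l' = l \<cdot> \<tau>"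
    using left_reduced_lhs_variant[OF assms(5,6,4,9)] .
  obtain \<rho> where "bij \<rho>" and \<tau>: "\<And>x. x \<in> vars_term l \<Longrightarrow> \<tau> x = Var (\<rho> x)"
    and \<sigma>\<tau>: "\<And>y. y \<in> vars_term l' \<Longrightarrow> \<sigma> y \<cdot> \<tau> = Var y"
    using mutual_instances_renaming[OF l l'] by blast
  have "vars_term r' \<subseteq> vars_term l'" and r: "vars_term r \<subseteq> vars_term l"
    using assms(1,2,9) S unfolding wf_trs_def by blast+
  then have "r' \<cdot> \<sigma> \<cdot> \<tau> = r' \<cdot> Var"
    unfolding subst_subst_compose by (intro term_subst_eq) (auto simp: \<sigma>\<tau>)
  then have r'_back: "r' \<cdot> \<sigma> \<cdot> \<tau> = r'" by (simp add: subst_apply_Var)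
  have "r' \<cdot> \<sigma> \<cdot> \<tau> \<in> NF (rstep S)"
    using right_reduced_mod_rhs_NF[OF assms(8) S] by (simp only: r'_back)
  then have "r' \<cdot> \<sigma> \<in> NF (rstep S)" by (rule NF_subst_imp_NF)
  with NF_equivalent_mod_rhs_equivB[OF assms(3,1,5,7,9) S l]
  have "(r \<cdot> \<tau>, r' \<cdot> \<sigma> \<cdot> \<tau>) \<in> equivB B" by (blast intro: equivB_subst)
  moreover have "r \<cdot> \<tau> = r \<cdot> (Var \<circ> \<rho>)"
    using r \<tau> by (intro term_subst_eq) auto
  ultimately have "(r \<cdot> (Var \<circ> \<rho>), r') \<in> equivB B"
    by (simp only: r'_back)
  moreover have "l \<cdot> (Var \<circ> \<rho>) = l'"
    unfolding l' by (intro term_subst_eq) (simp add: \<tau>)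
  ultimately have "right_equiv_variants B (l, r) (l', r')"
    using \<open>bij \<rho>\<close> unfolding right_equiv_variants_def by (intro exI[of _ \<rho>]) simp
  with S show ?thesis by blast
qed

theorem lemma6p17:
  fixes R S B :: "('f, 'v) trs"
  assumes "wf_trs R" and "wf_trs S"
    and "var_preserving_es B"
    and "NF_equivalent_mod R S B"
    and "terminating_mod R B" and "terminating_mod S B"
    and "left_reduced R" and "left_reduced S"
    and "right_reduced_mod R B" and "right_reduced_mod S B"
  shows "(\<forall>rl \<in> R. \<exists>rl' \<in> S. right_equiv_variants B rl rl') \<and>
         (\<forall>rl' \<in> S. \<exists>rl \<in> R. right_equiv_variants B rl' rl)"
proof -
  have SR: "NF_equivalent_mod S R B"
    using assms(4) by (rule NF_equivalent_mod_sym)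
  have NF_eq: "NF (rstep R) = NF (rstep S)"
    using NF_equivalent_mod_NF_subset[OF assms(4,6)] NF_equivalent_mod_NF_subset[OF SR assms(5)]
    by (rule equalityI)
  show ?thesis
    using rule_has_right_equiv_variant[OF assms(1,2,4) NF_eq assms(7-10)]
      rule_has_right_equiv_variant[OF assms(2,1) SR NF_eq[symmetric] assms(8,7,10,9)]
    by fast
qed

end
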